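(* Let $\mathscr{C}=\{C_j\}_{j\in I}$ be a polycylinder packing of $\mathbb{R}^{n+2}$, fix $i\in I$, and let $x$ be a point of the core $a_i$ of $C_i$. Then every vertex of the Dirichlet slice $d_x$ is not closer to the circle $S_x(1)$ than the vertices of a regular hexagon circumscribed about $S_x(1)$; that is, every vertex $v$ of $d_x$ satisfies $|v-x|\ge 2/\sqrt{3}$.
   Context: A polycylinder is a subset of $\mathbb{R}^{n+2}$ isometric to $\mathbb{D}^2\times\mathbb{R}^n$, where $\mathbb{D}^2$ is the closed unit disk. A polycylinder packing of $\mathbb{R}^{n+2}$ is a countable family of polycylinders with mutually disjoint interiors. The core $a_j$ of a polycylinder $C_j$ is the $n$-dimensional affine subspace such that $C_j$ is the set of points at distance at most $1$ from $a_j$. The Dirichlet cell $D_i$ of $C_i$ is the set of points of $\mathbb{R}^{n+2}$ no further from $C_i$ than from any other polycylinder of the packing. For $x\in a_i$, $p_x$ is the $2$-dimensional affine plane through $x$ orthogonal to $a_i$, the Dirichlet slice is $d_x=D_i\cap p_x$, and $S_x(r)$ denotes the circle of radius $r$ in $p_x$ centered at $x$. A vertex of $d_x$ is a boundary point of $d_x$ at which $C_i$ and at least two other polycylinders of the packing are equidistant (i.e. where two boundary arcs of $d_x$ meet). *)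

theory Defs
  imports "HOL-Analysis.Analysis"
begin

text \<open>A polycylinder in a Euclidean space of dimension n+2 is determined by its core,
an affine subspace of dimension n = DIM - 2; the polycylinder is the set of points
at distance at most 1 from the core.\<close>

definition is_core :: "'a::euclidean_space set \<Rightarrow> bool" where
  "is_core a \<longleftrightarrow> affine a \<and> a \<noteq> {} \<and> aff_dim a = int DIM('a) - 2"

definition polycyl :: "'a::euclidean_space set \<Rightarrow> 'a set" where
  "polycyl a = {y. infdist y a \<le> 1}"

definition polycyl_packing :: "'i set \<Rightarrow> ('i \<Rightarrow> 'a::euclidean_space set) \<Rightarrow> bool" where
  "polycyl_packing I a \<longleftrightarrow> countable I \<and> (\<forall>j\<in>I. is_core (a j)) \<and>
     (\<forall>j\<in>I. \<forall>k\<in>I. j \<noteq> k \<longrightarrow> interior (polycyl (a j)) \<inter> interior (polycyl (a k)) = {})"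

definition dirichlet_cell :: "'i set \<Rightarrow> ('i \<Rightarrow> 'a::euclidean_space set) \<Rightarrow> 'i \<Rightarrow> 'a set" where
  "dirichlet_cell I a i =
     {y. \<forall>j\<in>I. infdist y (polycyl (a i)) \<le> infdist y (polycyl (a j))}"

definition orth_plane :: "'a::euclidean_space set \<Rightarrow> 'a \<Rightarrow> 'a set" where
  "orth_plane a x = {y. \<forall>z\<in>a. inner (y - x) (z - x) = 0}"

definition dirichlet_slice :: "'i set \<Rightarrow> ('i \<Rightarrow> 'a::euclidean_space set) \<Rightarrow> 'i \<Rightarrow> 'a \<Rightarrow> 'a set" where
  "dirichlet_slice I a i x = dirichlet_cell I a i \<inter> orth_plane (a i) x"

definition slice_vertex :: "'i set \<Rightarrow> ('i \<Rightarrow> 'a::euclidean_space set) \<Rightarrow> 'i \<Rightarrow> 'a \<Rightarrow> 'a \<Rightarrow> bool" where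
  "slice_vertex I a i x v \<longleftrightarrow>
     v \<in> dirichlet_slice I a i x \<and> v \<in> rel_frontier (dirichlet_slice I a i x) \<and>
     (\<exists>j\<in>I. \<exists>k\<in>I. j \<noteq> i \<and> k \<noteq> i \<and> j \<noteq> k \<and>
        infdist v (polycyl (a j)) = infdist v (polycyl (a i)) \<and>
        infdist v (polycyl (a k)) = infdist v (polycyl (a i)))"

end

theory Submission
  imports Defs
begin

text \<open>At a vertex v the polycylinders C_i, C_j, C_k are at a common distance \<delta> from v, and
\<delta> \<le> max (|v - x| - 1) 0 because x lies on the core of C_i. Hence v has a core point of each of
the three polycylinders within distance R = max |v - x| 1. Disjointness of interiors forces
these three core points to be pairwise at distance at least 2, and three such points in a ball
of radius R require 4 \<le> 3 R^2. So R > 1, i.e. R = |v - x| \<ge> 2 / sqrt 3.\<close>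

lemma separated_triple_in_cball:
  fixes a b c z :: "'a::real_inner"
  assumes "dist a z \<le> R" "dist b z \<le> R" "dist c z \<le> R"
    and "d \<le> dist a b" "d \<le> dist a c" "d \<le> dist b c" "0 \<le> d"
  shows "d\<^sup>2 \<le> 3 * R\<^sup>2"
proof -
  define u v w where "u = a - z" and "v = b - z" and "w = c - z"
  have "dist a b = norm (u - v)" "dist a c = norm (u - w)" "dist b c = norm (v - w)"
    by (simp_all add: u_def v_def w_def dist_norm)
  with assms(4-7) have sep: "d\<^sup>2 \<le> (norm (u - v))\<^sup>2" "d\<^sup>2 \<le> (norm (u - w))\<^sup>2" "d\<^sup>2 \<le> (norm (v - w))\<^sup>2"
    by (simp_all add: power_mono)
  have "dist a z = norm u" "dist b z = norm v" "dist c z = norm w"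
    by (simp_all add: u_def v_def w_def dist_norm)
  with assms(1-3) have rad: "(norm u)\<^sup>2 \<le> R\<^sup>2" "(norm v)\<^sup>2 \<le> R\<^sup>2" "(norm w)\<^sup>2 \<le> R\<^sup>2"
    by (simp_all add: power_mono)
  have "(norm (u - v))\<^sup>2 + (norm (u - w))\<^sup>2 + (norm (v - w))\<^sup>2 + (norm (u + v + w))\<^sup>2
      = 3 * ((norm u)\<^sup>2 + (norm v)\<^sup>2 + (norm w)\<^sup>2)"
    by (simp add: power2_norm_eq_inner inner_diff inner_add inner_commute)
  with sep rad show ?thesis
    by (smt (verit) zero_le_power2)
qed

lemma ball_subset_interior_polycyl:
  fixes A :: "'a::euclidean_space set"
  assumes "q \<in> A"
  shows "ball q 1 \<subseteq> interior (polycyl A)"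
proof -
  have "ball q 1 \<subseteq> polycyl A"
    using assms by (auto simp: polycyl_def dist_commute intro!: infdist_le2)
  then show ?thesis
    by (simp add: interior_maximal)
qed

lemma polycyl_interiors_disjoint_imp_core_dist:
  fixes A B :: "'a::euclidean_space set"
  assumes "interior (polycyl A) \<inter> interior (polycyl B) = {}" "p \<in> A" "q \<in> B"
  shows "2 \<le> dist p q"
proof (rule ccontr)
  assume "\<not> 2 \<le> dist p q"
  then have "dist p (midpoint p q) < 1" "dist q (midpoint p q) < 1"
    by (simp_all add: dist_midpoint dist_commute)
  then have "midpoint p q \<in> interior (polycyl A) \<inter> interior (polycyl B)"
    using ball_subset_interior_polycyl[OF assms(2)] ball_subset_interior_polycyl[OF assms(3)]
    by auto
  with assms(1) show False
    by simp
qed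

lemma infdist_le_infdist_polycyl:
  fixes A :: "'a::euclidean_space set"
  shows "infdist v A \<le> infdist v (polycyl A) + 1"
proof (cases "A = {}")
  case True
  then have "infdist v A = 0"
    by (simp add: infdist_def)
  then show ?thesis
    using infdist_nonneg[of v "polycyl A"] by simp
next
  case False
  moreover have "A \<subseteq> polycyl A"
    by (auto simp: polycyl_def)
  ultimately have "polycyl A \<noteq> {}"
    by blast
  have "infdist v A - 1 \<le> infdist v (polycyl A)"
    unfolding infdist_notempty[OF \<open>polycyl A \<noteq> {}\<close>]
  proof (rule cINF_greatest)
    fix p
    assume "p \<in> polycyl A"
    then have "infdist p A \<le> 1"
      by (simp add: polycyl_def)
    moreover have "infdist v A \<le> infdist p A + dist v p"
      by (rule infdist_triangle)
    ultimately show "infdist v A - 1 \<le> dist v p"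
      by simp
  qed (use \<open>polycyl A \<noteq> {}\<close> in simp)
  then show ?thesis
    by simp
qed

lemma infdist_polycyl_le:
  fixes A :: "'a::euclidean_space set"
  assumes "x \<in> A"
  shows "infdist v (polycyl A) \<le> max (dist v x - 1) 0"
proof (cases "dist v x \<le> 1")
  case True
  then have "v \<in> polycyl A"
    using assms by (auto simp: polycyl_def intro: infdist_le2)
  then show ?thesis
    by simp
next
  case False
  define r where "r = dist v x"
  define p where "p = x + (1 / r) *\<^sub>R (v - x)"
  have "r > 1"
    using False r_def by simp
  then have "dist p x = 1"
    by (auto simp: p_def r_def dist_norm)
  then have "p \<in> polycyl A"
    using assms by (auto simp: polycyl_def intro: infdist_le2)
  have "v - p = (1 - 1 / r) *\<^sub>R (v - x)"
    by (simp add: p_def algebra_simps)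
  moreover have "0 \<le> 1 - 1 / r"
    using \<open>r > 1\<close> by simp
  ultimately have "dist v p = (1 - 1 / r) * r"
    by (simp add: dist_norm r_def)
  also have "\<dots> = r - 1"
    using \<open>r > 1\<close> by (simp add: field_simps)
  finally have "dist v p = r - 1" .
  with \<open>p \<in> polycyl A\<close> show ?thesis
    using r_def by (metis infdist_le max.coboundedI1)
qed

lemma equidistant_polycyl_triple_dist:
  fixes A B C :: "'a::euclidean_space set"
  assumes "closed B" "B \<noteq> {}" "closed C" "C \<noteq> {}"
    and "interior (polycyl A) \<inter> interior (polycyl B) = {}"
    and "interior (polycyl A) \<inter> interior (polycyl C) = {}"
    and "interior (polycyl B) \<inter> interior (polycyl C) = {}"
    and "x \<in> A"
    and "infdist v (polycyl B) = infdist v (polycyl A)"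
    and "infdist v (polycyl C) = infdist v (polycyl A)"
  shows "2 / sqrt 3 \<le> dist v x"
proof -
  define R where "R = max (dist v x) 1"
  have own: "infdist v (polycyl A) \<le> R - 1"
    using infdist_polycyl_le[OF assms(8), of v] by (simp add: R_def)
  obtain q where q: "q \<in> B" "infdist v B = dist v q"
    using infdist_attains_inf[OF assms(1,2)] by blast
  obtain q' where q': "q' \<in> C" "infdist v C = dist v q'"
    using infdist_attains_inf[OF assms(3,4)] by blast
  have "dist x v \<le> R" "dist q v \<le> R" "dist q' v \<le> R"
    using q q' own assms(9,10) infdist_le_infdist_polycyl[of v B] infdist_le_infdist_polycyl[of v C]
    by (auto simp: R_def dist_commute)
  moreover have "2 \<le> dist x q" "2 \<le> dist x q'" "2 \<le> dist q q'"
    using polycyl_interiors_disjoint_imp_core_dist assms(5-8) q(1) q'(1) by blast+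
  ultimately have "2\<^sup>2 \<le> 3 * R\<^sup>2"
    using separated_triple_in_cball[of x v R q q' 2] by simp
  then have R2: "4 / 3 \<le> R\<^sup>2"
    by simp
  then have "R = dist v x"
    by (auto simp: R_def max_def split: if_splits)
  with R2 have "sqrt (4 / 3) \<le> dist v x"
    by (simp add: real_le_lsqrt)
  then show ?thesis
    by (simp add: real_sqrt_divide)
qed

theorem mainTheorem5:
  fixes I :: "'i set" and a :: "'i \<Rightarrow> 'a::euclidean_space set"
    and i :: 'i and x v :: 'a
  assumes "DIM('a) \<ge> 2"
    and "polycyl_packing I a"
    and "i \<in> I"
    and "x \<in> a i"
    and "slice_vertex I a i x v"
  shows "dist v x \<ge> 2 / sqrt 3"
proof -
  obtain j k where jk: "j \<in> I" "k \<in> I" "j \<noteq> i" "k \<noteq> i" "j \<noteq> k"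
    "infdist v (polycyl (a j)) = infdist v (polycyl (a i))"
    "infdist v (polycyl (a k)) = infdist v (polycyl (a i))"
    using assms(5) unfolding slice_vertex_def by blast
  have core: "is_core (a l)" if "l \<in> I" for l
    using assms(2) that by (simp add: polycyl_packing_def)
  have disjoint: "interior (polycyl (a l)) \<inter> interior (polycyl (a m)) = {}"
    if "l \<in> I" "m \<in> I" "l \<noteq> m" for l m
    using assms(2) that by (simp add: polycyl_packing_def)
  have "closed (a l)" "a l \<noteq> {}" if "l \<in> I" for l
    using core[OF that] by (simp_all add: is_core_def affine_closed)
  with jk assms(3,4) show ?thesis
    by (intro equidistant_polycyl_triple_dist[where A = "a i" and B = "a j" and C = "a k"]
        disjoint) auto
qed

end
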